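(* Let $U\subset\mathbb{R}^n$ be open and connected, and let $Qw=\Delta w-\frac{D^2w(Dw,Dw)}{1+|Dw|^2}+|Dw|^2$. (i) If $w\in C^2(U)$ satisfies $Qw\ge 0$ in $U$ and attains a maximum at a point of $U$, then $w$ is constant. (ii) If $w\in C^2(U)$ satisfies $Qw\le 0$ in $U$ and attains a minimum at a point of $U$, then $w$ is constant. Consequently, if $u\in C^2(U)$, $u>0$, satisfies $\operatorname{div}\frac{u\,Du}{\sqrt{u^2+|Du|^2}}\ge 0$ in $U$ and attains a maximum at a point of $U$, then $u$ is constant; and if $u\in C^2(U)$, $u>0$, satisfies $\operatorname{div}\frac{u\,Du}{\sqrt{u^2+|Du|^2}}\le 0$ in $U$ and attains a minimum at a point of $U$, then $u$ is constant.
   Context: $D^2w(Dw,Dw)=\sum_{i,j}\partial_i\partial_j w\,\partial_i w\,\partial_j w$. *)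

theory Defs
  imports "HOL-Analysis.Analysis"
begin

definition partial :: "'n::finite \<Rightarrow> (real^'n \<Rightarrow> real) \<Rightarrow> real^'n \<Rightarrow> real" where
  "partial i f x = deriv (\<lambda>t. f (x + t *\<^sub>R axis i 1)) 0"

definition C2_on :: "(real^'n::finite) set \<Rightarrow> (real^'n \<Rightarrow> real) \<Rightarrow> bool" where
  "C2_on U f \<longleftrightarrow> (\<forall>x\<in>U. f differentiable (at x)) \<and>
     (\<forall>i. \<forall>x\<in>U. (partial i f) differentiable (at x)) \<and>
     (\<forall>i j. continuous_on U (partial j (partial i f)))"

definition grad_sq :: "(real^'n::finite \<Rightarrow> real) \<Rightarrow> real^'n \<Rightarrow> real" where
  "grad_sq w x = (\<Sum>i\<in>UNIV. (partial i w x)^2)"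

definition Qop :: "(real^'n::finite \<Rightarrow> real) \<Rightarrow> real^'n \<Rightarrow> real" where
  "Qop w x = (\<Sum>i\<in>UNIV. partial i (partial i w) x)
     - (\<Sum>i\<in>UNIV. \<Sum>j\<in>UNIV. partial i (partial j w) x * partial i w x * partial j w x)
         / (1 + grad_sq w x)
     + grad_sq w x"

definition divop :: "(real^'n::finite \<Rightarrow> real) \<Rightarrow> real^'n \<Rightarrow> real" where
  "divop u x = (\<Sum>i\<in>UNIV. partial i
       (\<lambda>y. u y * partial i u y / sqrt ((u y)^2 + grad_sq u y)) x)"

end

theory Submission
  imports Defs
begin

text \<open>Hopf's boundary point argument. If the set where \<open>w\<close> attains its maximum \<open>M\<close> were not open,
  there would be a ball \<open>B(y, R) \<subseteq> U\<close> with \<open>w < M\<close> inside and \<open>w(x\<^sub>2) = M\<close> at a boundary point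
  \<open>x\<^sub>2\<close>. Perturb \<open>w\<close> by \<open>\<epsilon> exp (-\<alpha> |x - y|\<^sup>2)\<close> and maximise over the annulus
  \<open>R/2 \<le> |x - y| \<le> R\<close>. At an interior maximum \<open>z\<close> the first-order condition determines \<open>Dw(z)\<close>, and
  since the coefficient matrix \<open>I - p p\<^sup>T / (1 + |p|\<^sup>2)\<close> of \<open>Q\<close> is positive definite, the
  second-order condition together with \<open>Qw(z) \<ge> 0\<close> fails once \<open>\<alpha>\<close> is large and \<open>\<epsilon>\<close> small.
  Hence the maximum sits at \<open>x\<^sub>2\<close>, where \<open>Dw = 0\<close> but the barrier strictly increases towards
  \<open>y\<close>: a contradiction. By connectedness \<open>w\<close> is constant. The minimum principle follows from
  \<open>Q(-w) = 2|Dw|\<^sup>2 - Qw\<close>, and the statements about \<open>u\<close> from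
  \<open>Q(ln u) = div (u Du / sqrt (u\<^sup>2 + |Du|\<^sup>2)) \<cdot> sqrt (u\<^sup>2 + |Du|\<^sup>2) / u\<^sup>2\<close>.\<close>

definition twice_differentiable_on :: "(real^'n::finite) set \<Rightarrow> (real^'n \<Rightarrow> real) \<Rightarrow> bool" where
  "twice_differentiable_on U f \<longleftrightarrow>
     (\<forall>x\<in>U. f differentiable (at x)) \<and> (\<forall>i. \<forall>x\<in>U. partial i f differentiable (at x))"

definition grad :: "(real^'n::finite \<Rightarrow> real) \<Rightarrow> real^'n \<Rightarrow> real^'n" where
  "grad f x = (\<chi> i. partial i f x)"

definition hessian :: "(real^'n::finite \<Rightarrow> real) \<Rightarrow> real^'n \<Rightarrow> real^'n^'n" where
  "hessian f x = (\<chi> i j. partial i (partial j f) x)"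

lemma C2_on_imp_twice_differentiable_on: "C2_on U f \<Longrightarrow> twice_differentiable_on U f"
  by (simp add: C2_on_def twice_differentiable_on_def)

lemma twice_differentiable_on_imp_continuous_on: "twice_differentiable_on U f \<Longrightarrow> continuous_on U f"
  unfolding twice_differentiable_on_def
  by (meson continuous_at_imp_continuous_on differentiable_imp_continuous_within)

lemma grad_sq_eq_inner: "grad_sq f x = grad f x \<bullet> grad f x"
  by (simp add: grad_sq_def grad_def inner_vec_def power2_eq_square)

lemma Qop_eq:
  "Qop w x = trace (hessian w x) - grad w x \<bullet> (hessian w x *v grad w x) / (1 + grad w x \<bullet> grad w x)
     + grad w x \<bullet> grad w x"
  by (simp add: Qop_def grad_sq_def power2_eq_square trace_def hessian_def grad_def inner_vec_def
      matrix_vector_mult_def sum_distrib_left algebra_simps)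

subsection \<open>Partial derivatives\<close>

lemma partial_eqI:
  "((\<lambda>t. f (x + t *\<^sub>R axis i 1)) has_real_derivative D) (at 0) \<Longrightarrow> partial i f x = D"
  unfolding partial_def by (rule DERIV_imp_deriv)

lemma has_real_derivative_line:
  fixes f :: "real^'n::finite \<Rightarrow> real"
  assumes "(f has_derivative f') (at (x + t *\<^sub>R e))"
  shows "((\<lambda>t. f (x + t *\<^sub>R e)) has_real_derivative f' e) (at t)"
proof -
  have "((\<lambda>t. f (x + t *\<^sub>R e)) has_derivative (\<lambda>t. f' (t *\<^sub>R e))) (at t)"
    by (rule has_derivative_compose[where g=f and f="\<lambda>t. x + t *\<^sub>R e", simplified])
       (auto intro!: derivative_eq_intros assms)
  moreover have "(\<lambda>t. f' (t *\<^sub>R e)) = (*) (f' e)"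
    by (simp add: fun_eq_iff linear_scale[OF has_derivative_linear[OF assms]])
  ultimately show ?thesis by (simp add: has_field_derivative_def)
qed

lemma partial_eq_derivative:
  fixes f :: "real^'n::finite \<Rightarrow> real"
  assumes "(f has_derivative f') (at x)"
  shows "partial i f x = f' (axis i 1)"
  by (rule partial_eqI, rule has_real_derivative_line) (simp add: assms)

lemma has_real_derivative_along_line:
  fixes f :: "real^'n::finite \<Rightarrow> real"
  assumes "f differentiable (at (x + t0 *\<^sub>R e))"
  shows "((\<lambda>t. f (x + t *\<^sub>R e)) has_real_derivative (\<Sum>j\<in>UNIV. e$j * partial j f (x + t0 *\<^sub>R e))) (at t0)"
proof -
  obtain f' where f': "(f has_derivative f') (at (x + t0 *\<^sub>R e))"
    using assms differentiable_def by blast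
  then have lin: "linear f'" using has_derivative_linear by blast
  have "f' e = f' (\<Sum>j\<in>UNIV. e$j *\<^sub>R axis j 1)"
    using basis_expansion[of e] by (simp add: scalar_mult_eq_scaleR)
  also have "\<dots> = (\<Sum>j\<in>UNIV. e$j * partial j f (x + t0 *\<^sub>R e))"
    by (simp add: linear_sum[OF lin] linear_scale[OF lin] partial_eq_derivative[OF f'])
  finally show ?thesis using has_real_derivative_line[OF f'] by simp
qed

lemma has_real_derivative_partial:
  fixes f :: "real^'n::finite \<Rightarrow> real"
  assumes "f differentiable (at x)"
  shows "((\<lambda>t. f (x + t *\<^sub>R axis i 1)) has_real_derivative partial i f x) (at 0)"
proof -
  have "(\<Sum>j\<in>UNIV. axis i 1 $ j * partial j f x) = partial i f x"
    by (simp add: axis_def if_distrib[of "\<lambda>c. c * _"] cong: if_cong)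
  then show ?thesis using has_real_derivative_along_line[of f x 0 "axis i 1"] assms by simp
qed

lemma partial_cong:
  fixes f g :: "real^'n::finite \<Rightarrow> real"
  assumes "open S" "x \<in> S" "\<And>y. y \<in> S \<Longrightarrow> f y = g y"
  shows "partial i f x = partial i g x"
  unfolding partial_def
proof (rule deriv_cong_ev[OF _ refl])
  have "((\<lambda>t. x + t *\<^sub>R axis i 1) \<longlongrightarrow> x) (nhds 0)"
    by (auto intro!: tendsto_eq_intros filterlim_ident)
  then have "eventually (\<lambda>t. x + t *\<^sub>R axis i 1 \<in> S) (nhds 0)"
    using assms(1,2) by (rule topological_tendstoD)
  then show "eventually (\<lambda>t. f (x + t *\<^sub>R axis i 1) = g (x + t *\<^sub>R axis i 1)) (nhds 0)"
    by eventually_elim (use assms(3) in auto)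
qed

lemma differentiable_at_cong_open:
  fixes f g :: "real^'n::finite \<Rightarrow> real"
  assumes "open S" "x \<in> S" "\<And>y. y \<in> S \<Longrightarrow> f y = g y" "f differentiable (at x)"
  shows "g differentiable (at x)"
  using assms has_derivative_transform_within_open unfolding differentiable_def by metis

lemma partial_minus:
  fixes f :: "real^'n::finite \<Rightarrow> real"
  assumes "f differentiable (at x)"
  shows "partial i (\<lambda>y. - f y) x = - partial i f x"
  using has_real_derivative_partial[OF assms] by (intro partial_eqI derivative_intros)

lemma partial_add:
  fixes f g :: "real^'n::finite \<Rightarrow> real"
  assumes "f differentiable (at x)" "g differentiable (at x)"
  shows "partial i (\<lambda>y. f y + g y) x = partial i f x + partial i g x"
  using has_real_derivative_partial[OF assms(1)] has_real_derivative_partial[OF assms(2)]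
  by (intro partial_eqI derivative_intros)

lemma partial_cmult:
  fixes f :: "real^'n::finite \<Rightarrow> real"
  assumes "f differentiable (at x)"
  shows "partial i (\<lambda>y. c * f y) x = c * partial i f x"
  using has_real_derivative_partial[OF assms] by (intro partial_eqI DERIV_cmult)

lemma grad_add_cmult:
  assumes "f differentiable (at x)" "g differentiable (at x)"
  shows "grad (\<lambda>x. f x + c * g x) x = grad f x + c *\<^sub>R grad g x"
  using assms by (simp add: grad_def vec_eq_iff partial_add partial_cmult)

lemma twice_differentiable_on_add:
  assumes "open U" "twice_differentiable_on U f" "twice_differentiable_on U g"
  shows "twice_differentiable_on U (\<lambda>x. f x + g x)"
  unfolding twice_differentiable_on_def
proof (intro conjI allI ballI)
  fix x assume x: "x \<in> U"
  show "(\<lambda>x. f x + g x) differentiable (at x)"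
    using assms x by (simp add: twice_differentiable_on_def)
  fix i
  have "(\<lambda>y. partial i f y + partial i g y) differentiable (at x)"
    using assms x by (simp add: twice_differentiable_on_def)
  then show "partial i (\<lambda>x. f x + g x) differentiable (at x)"
    by (rule differentiable_at_cong_open[OF assms(1) x, rotated])
       (use assms in \<open>auto simp: twice_differentiable_on_def partial_add\<close>)
qed

lemma twice_differentiable_on_cmult:
  assumes "open U" "twice_differentiable_on U f"
  shows "twice_differentiable_on U (\<lambda>x. c * f x)"
  unfolding twice_differentiable_on_def
proof (intro conjI allI ballI)
  fix x assume x: "x \<in> U"
  show "(\<lambda>x. c * f x) differentiable (at x)"
    using assms x by (simp add: twice_differentiable_on_def)
  fix i
  have "(\<lambda>y. c * partial i f y) differentiable (at x)"
    using assms x by (simp add: twice_differentiable_on_def)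
  then show "partial i (\<lambda>x. c * f x) differentiable (at x)"
    by (rule differentiable_at_cong_open[OF assms(1) x, rotated])
       (use assms in \<open>auto simp: twice_differentiable_on_def partial_cmult\<close>)
qed

lemma hessian_add:
  assumes "open U" "twice_differentiable_on U f" "twice_differentiable_on U g" "x \<in> U"
  shows "hessian (\<lambda>x. f x + g x) x = hessian f x + hessian g x"
proof -
  have "partial i (partial j (\<lambda>x. f x + g x)) x = partial i (\<lambda>y. partial j f y + partial j g y) x" for i j
    by (rule partial_cong[OF assms(1,4)])
       (use assms in \<open>auto simp: twice_differentiable_on_def partial_add\<close>)
  also have "\<dots> i j = partial i (partial j f) x + partial i (partial j g) x" for i j
    by (rule partial_add) (use assms in \<open>auto simp: twice_differentiable_on_def\<close>)
  finally show ?thesis by (simp add: hessian_def vec_eq_iff)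
qed

lemma hessian_cmult:
  assumes "open U" "twice_differentiable_on U f" "x \<in> U"
  shows "hessian (\<lambda>x. c * f x) x = c *\<^sub>R hessian f x"
proof -
  have "partial i (partial j (\<lambda>x. c * f x)) x = partial i (\<lambda>y. c * partial j f y) x" for i j
    by (rule partial_cong[OF assms(1,3)])
       (use assms in \<open>auto simp: twice_differentiable_on_def partial_cmult\<close>)
  also have "\<dots> i j = c * partial i (partial j f) x" for i j
    by (rule partial_cmult) (use assms in \<open>auto simp: twice_differentiable_on_def\<close>)
  finally show ?thesis by (simp add: hessian_def vec_eq_iff)
qed

subsection \<open>Necessary conditions at a maximum\<close>

lemma line_in_ball:
  fixes z e :: "real^'n::finite"
  assumes "\<rho> > 0"
  obtains \<delta> where "\<delta> > 0" "\<And>t. \<bar>t\<bar> < \<delta> \<Longrightarrow> z + t *\<^sub>R e \<in> ball z \<rho>"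
proof
  show "\<rho> / (norm e + 1) > 0" using assms by (simp add: add_nonneg_pos)
  fix t :: real assume t: "\<bar>t\<bar> < \<rho> / (norm e + 1)"
  have "\<bar>t\<bar> * norm e \<le> \<bar>t\<bar> * (norm e + 1)" by (simp add: mult_left_mono)
  also have "\<dots> < \<rho>" using t by (simp add: pos_less_divide_eq add_nonneg_pos)
  finally show "z + t *\<^sub>R e \<in> ball z \<rho>" by (simp add: dist_norm)
qed

lemma local_max_grad_eq_0:
  fixes f :: "real^'n::finite \<Rightarrow> real"
  assumes "\<rho> > 0" "\<forall>x\<in>ball z \<rho>. f x \<le> f z" "f differentiable (at z)"
  shows "grad f z = 0"
proof -
  have "partial i f z = 0" for i
  proof -
    obtain \<delta> where "\<delta> > 0" "\<And>t. \<bar>t\<bar> < \<delta> \<Longrightarrow> z + t *\<^sub>R axis i 1 \<in> ball z \<rho>"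
      using line_in_ball[OF assms(1)] by blast
    then show ?thesis
      using DERIV_local_max[OF has_real_derivative_partial[OF assms(3)], of \<delta>] assms(2) by force
  qed
  then show ?thesis by (simp add: grad_def vec_eq_iff)
qed

lemma one_sided_max_grad_inner_nonpos:
  fixes f :: "real^'n::finite \<Rightarrow> real"
  assumes "f differentiable (at x)" "\<delta> > 0" "\<And>t. 0 < t \<Longrightarrow> t < \<delta> \<Longrightarrow> f (x + t *\<^sub>R e) \<le> f x"
  shows "grad f x \<bullet> e \<le> 0"
proof (rule ccontr)
  have "((\<lambda>t. f (x + t *\<^sub>R e)) has_real_derivative grad f x \<bullet> e) (at 0)"
    using has_real_derivative_along_line[of f x 0 e] assms(1)
    by (simp add: grad_def inner_vec_def mult.commute)
  moreover assume "\<not> grad f x \<bullet> e \<le> 0"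
  ultimately obtain d where "d > 0" "\<forall>h>0. h < d \<longrightarrow> f (x + 0 *\<^sub>R e) < f (x + (0 + h) *\<^sub>R e)"
    using DERIV_pos_inc_right[of "\<lambda>t. f (x + t *\<^sub>R e)"] by (meson not_le)
  moreover have t: "0 < min d \<delta> / 2" "min d \<delta> / 2 < d" "min d \<delta> / 2 < \<delta>"
    using \<open>d > 0\<close> assms(2) by auto
  ultimately have "f x < f (x + (min d \<delta> / 2) *\<^sub>R e)" by simp
  then show False using assms(3)[OF t(1,3)] by simp
qed

lemma local_max_second_derivative_nonpos:
  fixes g g' :: "real \<Rightarrow> real"
  assumes "\<delta> > 0" and max: "\<And>t. \<bar>t\<bar> < \<delta> \<Longrightarrow> g t \<le> g 0"
    and g': "\<And>t. \<bar>t\<bar> < \<delta> \<Longrightarrow> (g has_real_derivative g' t) (at t)"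
    and g'': "(g' has_real_derivative c) (at 0)"
  shows "c \<le> 0"
proof (rule ccontr)
  assume "\<not> c \<le> 0"
  then obtain d where d: "d > 0" "\<And>h. 0 < h \<Longrightarrow> h < d \<Longrightarrow> g' 0 < g' h"
    using DERIV_pos_inc_right[OF g''] by force
  have "g' 0 = 0"
    using DERIV_local_max[OF g' assms(1)] assms(1) max by simp
  define h where "h = min d \<delta> / 2"
  have h: "0 < h" "h < d" "h < \<delta>" using d assms(1) by (auto simp: h_def)
  obtain s where s: "0 < s" "s < h" "g h - g 0 = h * g' s"
    using MVT2[of 0 h g g'] h g' by auto
  have "g' s > 0" using d(2)[of s] s h \<open>g' 0 = 0\<close> by simp
  then have "g h > g 0" using s h mult_pos_pos[of h "g' s"] by linarith
  then show False using max[of h] h by simp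
qed

lemma local_max_hessian_quad_form_nonpos:
  fixes f :: "real^'n::finite \<Rightarrow> real"
  assumes "\<rho> > 0" "\<forall>x\<in>ball z \<rho>. f x \<le> f z" "\<forall>x\<in>ball z \<rho>. f differentiable (at x)"
    and "\<forall>j. partial j f differentiable (at z)"
  shows "e \<bullet> (hessian f z *v e) \<le> 0"
proof -
  obtain \<delta> where \<delta>: "\<delta> > 0" "\<And>t. \<bar>t\<bar> < \<delta> \<Longrightarrow> z + t *\<^sub>R e \<in> ball z \<rho>"
    using line_in_ball[OF assms(1)] by blast
  have "((\<lambda>t. f (z + t *\<^sub>R e)) has_real_derivative (\<Sum>j\<in>UNIV. e$j * partial j f (z + t *\<^sub>R e))) (at t)"
    if "\<bar>t\<bar> < \<delta>" for t
    using has_real_derivative_along_line \<delta>(2)[OF that] assms(3) by blast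
  moreover have "((\<lambda>t. \<Sum>j\<in>UNIV. e$j * partial j f (z + t *\<^sub>R e)) has_real_derivative
      (\<Sum>j\<in>UNIV. e$j * (\<Sum>k\<in>UNIV. e$k * partial k (partial j f) z))) (at 0)"
    using has_real_derivative_along_line[of "partial _ f" z 0 e] assms(4)
    by (auto intro!: derivative_eq_intros simp: mult.commute)
  ultimately have "(\<Sum>j\<in>UNIV. e$j * (\<Sum>k\<in>UNIV. e$k * partial k (partial j f) z)) \<le> 0"
    using \<delta> assms(2) by (intro local_max_second_derivative_nonpos[where g="\<lambda>t. f (z + t *\<^sub>R e)"]) auto
  moreover have "(\<Sum>j\<in>UNIV. e$j * (\<Sum>k\<in>UNIV. e$k * partial k (partial j f) z)) = e \<bullet> (hessian f z *v e)"
    unfolding hessian_def inner_vec_def matrix_vector_mult_def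
    by (simp add: sum_distrib_left algebra_simps) (subst sum.swap, simp add: algebra_simps)
  ultimately show ?thesis by simp
qed

lemma compact_strict_bound_margin:
  fixes f :: "'a::topological_space \<Rightarrow> real"
  assumes "compact K" "continuous_on K f" "\<forall>x\<in>K. f x < M"
  obtains \<delta> where "\<delta> > 0" "\<forall>x\<in>K. f x \<le> M - \<delta>"
proof (cases "K = {}")
  case True
  then show ?thesis using that[of 1] by simp
next
  case False
  then obtain x0 where "x0 \<in> K" "\<forall>x\<in>K. f x \<le> f x0"
    using continuous_attains_sup[OF assms(1) _ assms(2)] by blast
  then show ?thesis using that[of "M - f x0"] assms(3) by auto
qed

subsection \<open>Ellipticity of the operator\<close>

lemma trace_scaleR: "trace (c *\<^sub>R A) = c * trace (A :: real^'n::finite^'n)"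
  by (simp add: trace_def sum_distrib_left)

lemma scaleR_matrix_vector_mult: "(c *\<^sub>R A) *v x = c *\<^sub>R (A *v x :: real^'m::finite)"
  by (simp add: matrix_vector_mult_def vec_eq_iff sum_distrib_left algebra_simps)

lemma sum_quad_form_axis_diff:
  fixes W :: "real^'n::finite^'n"
  shows "(\<Sum>i\<in>UNIV. (axis i 1 - (b * p$i) *\<^sub>R p) \<bullet> (W *v (axis i 1 - (b * p$i) *\<^sub>R p)))
    = trace W - (2 * b - b^2 * (p \<bullet> p)) * (p \<bullet> (W *v p))"
proof -
  have col: "(\<Sum>i\<in>UNIV. p$i * (p \<bullet> (W *v axis i 1))) = p \<bullet> (W *v p)"
    by (simp add: inner_vec_def matrix_vector_mult_def axis_def sum_distrib_left algebra_simps
        if_distrib[of "\<lambda>c. _ * c"] cong: if_cong) (rule trans[OF sum.swap], simp add: algebra_simps)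
  have expand: "(axis i 1 - c *\<^sub>R p) \<bullet> (W *v (axis i 1 - c *\<^sub>R p))
      = W$i$i - c * (W *v p)$i - c * (p \<bullet> (W *v axis i 1)) + c^2 * (p \<bullet> (W *v p))" for i c
  proof -
    have "(W *v axis i 1)$i = W$i$i"
      by (simp add: matrix_vector_mul_component inner_axis)
    then show ?thesis
      by (simp add: inner_axis' algebra_simps power2_eq_square)
  qed
  have "(\<Sum>i\<in>UNIV. (axis i 1 - (b * p$i) *\<^sub>R p) \<bullet> (W *v (axis i 1 - (b * p$i) *\<^sub>R p)))
    = (\<Sum>i\<in>UNIV. W$i$i - b * (p$i * (W *v p)$i) - b * (p$i * (p \<bullet> (W *v axis i 1)))
        + b^2 * ((p$i)^2 * (p \<bullet> (W *v p))))"
    unfolding expand by (simp add: algebra_simps power2_eq_square)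
  also have "\<dots> = trace W - (2 * b - b^2 * (p \<bullet> p)) * (p \<bullet> (W *v p))"
  proof -
    have "(\<Sum>i\<in>UNIV. b * (p$i * (W *v p)$i)) = b * (p \<bullet> (W *v p))"
      by (simp add: inner_vec_def sum_distrib_left)
    moreover have "(\<Sum>i\<in>UNIV. b * (p$i * (p \<bullet> (W *v axis i 1)))) = b * (p \<bullet> (W *v p))"
      by (simp add: col flip: sum_distrib_left)
    moreover have "(\<Sum>i\<in>UNIV. b^2 * ((p$i)^2 * q)) = b^2 * (p \<bullet> p) * q" for q
      by (simp add: inner_vec_def sum_distrib_left sum_distrib_right power2_eq_square mult.assoc)
    ultimately show ?thesis
      by (simp only: sum.distrib sum_subtractf trace_def[symmetric]) (simp add: algebra_simps)
  qed
  finally show ?thesis .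
qed

lemma sqrt_normalizer_identity:
  fixes P :: real
  assumes "P \<ge> 0"
  defines "b \<equiv> 1 / (sqrt (1 + P) * (sqrt (1 + P) + 1))"
  shows "2 * b - b^2 * P = 1 / (1 + P)"
proof -
  define s where "s = sqrt (1 + P)"
  have "s > 0" using assms by (simp add: s_def)
  then have "b * (s * (s + 1)) = 1" unfolding b_def s_def[symmetric] by simp
  moreover have "P = s^2 - 1" using assms by (simp add: s_def)
  ultimately have "(2 * b - b^2 * P) * (1 + P) = 1" by algebra
  then show ?thesis using assms by (simp add: field_simps)
qed

text \<open>With \<open>s = sqrt (1 + |p|\<^sup>2)\<close> and \<open>b = 1 / (s (s + 1))\<close>, the matrix \<open>I - b p p\<^sup>T\<close> is the
  square root of \<open>I - p p\<^sup>T / (1 + |p|\<^sup>2)\<close>, so the left-hand side below is a sum of values of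
  the quadratic form of \<open>W\<close>.\<close>

lemma trace_sub_normalized_quad_form_nonpos:
  fixes W :: "real^'n::finite^'n"
  assumes "\<And>e. e \<bullet> (W *v e) \<le> 0"
  shows "trace W - p \<bullet> (W *v p) / (1 + p \<bullet> p) \<le> 0"
proof -
  define b where "b = 1 / (sqrt (1 + p \<bullet> p) * (sqrt (1 + p \<bullet> p) + 1))"
  have "trace W - p \<bullet> (W *v p) / (1 + p \<bullet> p)
      = (\<Sum>i\<in>UNIV. (axis i 1 - (b * p$i) *\<^sub>R p) \<bullet> (W *v (axis i 1 - (b * p$i) *\<^sub>R p)))"
    unfolding sum_quad_form_axis_diff b_def sqrt_normalizer_identity[OF inner_ge_zero] by simp
  also have "\<dots> \<le> 0" by (intro sum_nonpos assms)
  finally show ?thesis .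
qed

subsection \<open>A Gaussian barrier\<close>

definition gaussian :: "real \<Rightarrow> real^'n::finite \<Rightarrow> real^'n \<Rightarrow> real" where
  "gaussian \<alpha> y x = exp (- \<alpha> * ((x - y) \<bullet> (x - y)))"

lemma has_derivative_gaussian:
  "(gaussian \<alpha> y has_derivative (\<lambda>h. - 2 * \<alpha> * gaussian \<alpha> y x * ((x - y) \<bullet> h))) (at x)"
  unfolding gaussian_def
  by (auto intro!: derivative_eq_intros simp: fun_eq_iff inner_commute algebra_simps)

lemma differentiable_gaussian: "gaussian \<alpha> y differentiable (at x)"
  using has_derivative_gaussian by (rule differentiableI)

lemma gaussian_eq_dist: "gaussian \<alpha> y x = exp (- \<alpha> * (dist x y)^2)"
  by (simp add: gaussian_def dist_norm power2_norm_eq_inner)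

lemma partial_gaussian: "partial i (gaussian \<alpha> y) x = - 2 * \<alpha> * gaussian \<alpha> y x * (x - y)$i"
  by (simp add: partial_eq_derivative[OF has_derivative_gaussian] inner_axis)

lemma grad_gaussian: "grad (gaussian \<alpha> y) x = (- 2 * \<alpha> * gaussian \<alpha> y x) *\<^sub>R (x - y)"
  by (simp add: grad_def partial_gaussian vec_eq_iff)

lemma hessian_gaussian:
  fixes x y :: "real^'n::finite"
  shows "hessian (gaussian \<alpha> y) x
     = (\<chi> i j. gaussian \<alpha> y x * (4 * \<alpha>^2 * (x - y)$i * (x - y)$j - 2 * \<alpha> * (if i = j then 1 else 0)))"
proof -
  have axis_nth': "axis i 1 $ j = (if i = j then 1 else (0::real))" for i j :: 'n
    by (simp add: axis_def)
  have "partial i (\<lambda>x. - 2 * \<alpha> * gaussian \<alpha> y x * (x - y)$j) x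
      = gaussian \<alpha> y x * (4 * \<alpha>^2 * (x - y)$i * (x - y)$j - 2 * \<alpha> * (if i = j then 1 else 0))" for i j
    by (subst partial_eq_derivative[where f'="\<lambda>h. - 2 * \<alpha> * ((- 2 * \<alpha> * gaussian \<alpha> y x * ((x - y) \<bullet> h)) * (x - y)$j
        + gaussian \<alpha> y x * h$j)"])
       (auto intro!: derivative_eq_intros has_derivative_gaussian
         bounded_linear.has_derivative[OF bounded_linear_vec_nth]
         simp: inner_axis axis_nth' algebra_simps power2_eq_square)
  then show ?thesis
    by (simp add: hessian_def partial_gaussian[abs_def] vec_eq_iff)
qed

lemma twice_differentiable_on_gaussian: "twice_differentiable_on U (gaussian \<alpha> y)"
  unfolding twice_differentiable_on_def partial_gaussian[abs_def]
  by (auto intro!: derivative_intros differentiable_gaussian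
      bounded_linear_imp_differentiable[OF bounded_linear_vec_nth])

lemma trace_hessian_gaussian:
  fixes x y :: "real^'n::finite"
  shows "trace (hessian (gaussian \<alpha> y) x)
    = gaussian \<alpha> y x * (4 * \<alpha>^2 * ((x - y) \<bullet> (x - y)) - 2 * \<alpha> * CARD('n))"
  by (simp add: hessian_gaussian trace_def inner_vec_def sum_subtractf sum.distrib sum_distrib_left
      algebra_simps power2_eq_square)

lemma quad_form_hessian_gaussian:
  fixes x y p :: "real^'n::finite"
  shows "p \<bullet> (hessian (gaussian \<alpha> y) x *v p)
    = gaussian \<alpha> y x * (4 * \<alpha>^2 * ((x - y) \<bullet> p)^2 - 2 * \<alpha> * (p \<bullet> p))"
proof -
  have "p \<bullet> (hessian (gaussian \<alpha> y) x *v p) = (\<Sum>i\<in>UNIV. \<Sum>j\<in>UNIV.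
      gaussian \<alpha> y x * (4 * \<alpha>^2 * (((x - y)$i * p$i) * ((x - y)$j * p$j))
        - 2 * \<alpha> * (if i = j then p$i * p$j else 0)))"
    by (simp add: hessian_gaussian inner_vec_def matrix_vector_mult_def sum_distrib_left
        if_distrib[of "\<lambda>c. _ * c"] algebra_simps cong: if_cong)
  also have "\<dots> = gaussian \<alpha> y x * (4 * \<alpha>^2 * ((x - y) \<bullet> p)^2 - 2 * \<alpha> * (p \<bullet> p))"
    by (simp add: sum_subtractf sum_distrib_left[symmetric] sum_product inner_vec_def
        power2_eq_square)
  finally show ?thesis .
qed

lemma twice_differentiable_on_gaussian_perturbation:
  assumes "open U" "twice_differentiable_on U w"
  shows "twice_differentiable_on U (\<lambda>x. w x + \<epsilon> * gaussian \<alpha> y x)"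
  using assms
  by (intro twice_differentiable_on_add twice_differentiable_on_cmult twice_differentiable_on_gaussian)

lemma grad_at_gaussian_perturbation_max:
  fixes w :: "real^'n::finite \<Rightarrow> real"
  assumes U: "twice_differentiable_on U w" and ball: "\<rho> > 0" "ball z \<rho> \<subseteq> U"
    and max: "\<forall>x\<in>ball z \<rho>. w x + \<epsilon> * gaussian \<alpha> y x \<le> w z + \<epsilon> * gaussian \<alpha> y z"
  shows "grad w z = (2 * \<alpha> * \<epsilon> * gaussian \<alpha> y z) *\<^sub>R (z - y)"
proof -
  have "z \<in> U" using ball by auto
  then have "w differentiable (at z)" using U by (simp add: twice_differentiable_on_def)
  then have "grad (\<lambda>x. w x + \<epsilon> * gaussian \<alpha> y x) z = 0"
    using max ball(1) by (intro local_max_grad_eq_0) (auto intro!: derivative_intros differentiable_gaussian)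
  moreover have "grad (\<lambda>x. w x + \<epsilon> * gaussian \<alpha> y x) z = grad w z + \<epsilon> *\<^sub>R grad (gaussian \<alpha> y) z"
    using \<open>w differentiable (at z)\<close> by (simp add: grad_add_cmult differentiable_gaussian)
  ultimately show ?thesis by (simp add: grad_gaussian algebra_simps add_eq_0_iff)
qed

lemma Qop_at_gaussian_perturbation_max:
  fixes w :: "real^'n::finite \<Rightarrow> real"
  assumes U: "open U" "twice_differentiable_on U w" and Q: "Qop w z \<ge> 0"
    and ball: "\<rho> > 0" "ball z \<rho> \<subseteq> U"
    and max: "\<forall>x\<in>ball z \<rho>. w x + \<epsilon> * gaussian \<alpha> y x \<le> w z + \<epsilon> * gaussian \<alpha> y z"
  defines "p \<equiv> grad w z"
  shows "\<epsilon> * trace (hessian (gaussian \<alpha> y) z)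
    - \<epsilon> * (p \<bullet> (hessian (gaussian \<alpha> y) z *v p)) / (1 + p \<bullet> p) \<le> p \<bullet> p"
proof -
  define f where "f x = w x + \<epsilon> * gaussian \<alpha> y x" for x
  have z: "z \<in> U" using ball by auto
  have f2: "twice_differentiable_on U f"
    unfolding f_def[abs_def] using U by (rule twice_differentiable_on_gaussian_perturbation)
  have "trace (hessian f z) - p \<bullet> (hessian f z *v p) / (1 + p \<bullet> p) \<le> 0"
    using max f2 ball z
    by (intro trace_sub_normalized_quad_form_nonpos local_max_hessian_quad_form_nonpos[of \<rho>])
       (auto simp: f_def twice_differentiable_on_def)
  moreover have "hessian f z = hessian w z + \<epsilon> *\<^sub>R hessian (gaussian \<alpha> y) z"
    unfolding f_def[abs_def]
    using hessian_add[OF U twice_differentiable_on_cmult[OF U(1) twice_differentiable_on_gaussian] z]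
      hessian_cmult[OF U(1) twice_differentiable_on_gaussian z]
    by simp
  moreover have "trace (hessian w z) - p \<bullet> (hessian w z *v p) / (1 + p \<bullet> p) + p \<bullet> p \<ge> 0"
    using Q by (simp add: Qop_eq p_def)
  ultimately show ?thesis
    by (simp add: trace_add trace_scaleR matrix_vector_mult_add_rdistrib scaleR_matrix_vector_mult
        inner_add_right add_divide_distrib)
qed

text \<open>In the next two lemmas \<open>A = \<epsilon> G\<close> with \<open>G = exp (-\<alpha> |z - y|\<^sup>2)\<close>, \<open>r2 = |z - y|\<^sup>2\<close>, \<open>n\<close> is the
  dimension and \<open>Dw(z) = c (z - y)\<close>, so that \<open>P = |Dw(z)|\<^sup>2\<close>; the hypothesis \<open>estimate\<close> is the
  conclusion of the previous lemma written out.\<close>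

lemma gaussian_barrier_estimate_reduced:
  fixes \<alpha> A r2 n :: real
  defines "c \<equiv> 2 * \<alpha> * A"
  defines "P \<equiv> c^2 * r2"
  assumes \<alpha>: "\<alpha> > 0" and A: "A > 0" and r2: "r2 \<ge> 0"
    and estimate: "A * (4 * \<alpha>^2 * r2 - 2 * \<alpha> * n) - A * (4 * \<alpha>^2 * (c * r2)^2 - 2 * \<alpha> * P) / (1 + P) \<le> P"
  shows "2 * \<alpha> * r2 - n * (1 + P) + P \<le> c * r2 * (1 + P)"
proof -
  have "1 + P > 0" using r2 by (simp add: P_def add_pos_nonneg)
  then have "A * (4 * \<alpha>^2 * r2 - 2 * \<alpha> * n) * (1 + P) - A * (4 * \<alpha>^2 * (c * r2)^2 - 2 * \<alpha> * P)
      \<le> P * (1 + P)"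
    using mult_right_mono[OF estimate, of "1 + P"] by (simp add: left_diff_distrib)
  moreover have "A * (4 * \<alpha>^2 * r2 - 2 * \<alpha> * n) * (1 + P) - A * (4 * \<alpha>^2 * (c * r2)^2 - 2 * \<alpha> * P)
      = (2 * \<alpha> * A) * (2 * \<alpha> * r2 - n * (1 + P) + P)"
    by (simp add: P_def algebra_simps power2_eq_square)
  moreover have "P * (1 + P) = (2 * \<alpha> * A) * (c * r2 * (1 + P))"
    by (simp add: P_def c_def algebra_simps power2_eq_square)
  ultimately show ?thesis using \<alpha> A by simp
qed

lemma gaussian_barrier_estimate_absurd:
  fixes \<alpha> \<epsilon> G R r2 n :: real
  defines "c \<equiv> 2 * \<alpha> * \<epsilon> * G"
  defines "P \<equiv> c^2 * r2"
  assumes \<alpha>: "\<alpha> > 0" and \<epsilon>: "\<epsilon> > 0" and G: "0 < G" "G \<le> 1" and R: "R > 0"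
    and r2: "R^2 / 4 \<le> r2" "r2 \<le> R^2" and n: "n \<ge> 0"
    and small: "2 * \<alpha> * \<epsilon> * R \<le> 1" and large: "\<alpha> * R^2 > 4 * R + 4 * n"
    and estimate: "\<epsilon> * G * (4 * \<alpha>^2 * r2 - 2 * \<alpha> * n) - \<epsilon> * G * (4 * \<alpha>^2 * (c * r2)^2 - 2 * \<alpha> * P) / (1 + P) \<le> P"
  shows False
proof -
  have "c > 0" using \<alpha> \<epsilon> G(1) by (simp add: c_def)
  have "c * R = G * (2 * \<alpha> * \<epsilon> * R)" by (simp add: c_def)
  also have "\<dots> \<le> 1"
    using \<alpha> \<epsilon> G R small mult_mono[of G 1 "2 * \<alpha> * \<epsilon> * R" 1] by simp
  finally have "c * R \<le> 1" .
  have "c * r2 \<le> R"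
  proof -
    have "c * r2 \<le> c * R^2" using r2(2) \<open>c > 0\<close> by simp
    also have "\<dots> \<le> R" using \<open>c * R \<le> 1\<close> R mult_right_mono[of "c * R" 1 R]
      by (simp add: power2_eq_square algebra_simps)
    finally show ?thesis .
  qed
  have "0 \<le> r2" using r2(1) zero_le_power2[of R] by linarith
  have "P = c * (c * r2)" by (simp add: P_def power2_eq_square)
  also have "\<dots> \<le> c * R" using \<open>c * r2 \<le> R\<close> \<open>c > 0\<close> by simp
  finally have "P \<le> 1" using \<open>c * R \<le> 1\<close> by simp
  have "2 * \<alpha> * r2 - n * (1 + P) + P \<le> c * r2 * (1 + P)"
    using gaussian_barrier_estimate_reduced[of \<alpha> "\<epsilon> * G" r2 n] \<alpha> \<epsilon> G(1) \<open>0 \<le> r2\<close> estimate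
    by (simp add: c_def P_def mult.assoc)
  moreover have "c * r2 * (1 + P) \<le> R * 2"
    using \<open>c * r2 \<le> R\<close> \<open>P \<le> 1\<close> \<open>0 \<le> r2\<close> \<open>c > 0\<close> R by (intro mult_mono) (auto simp: P_def)
  moreover have "n * (1 + P) \<le> n * 2" using \<open>P \<le> 1\<close> n by (simp add: mult_left_mono)
  moreover have "\<alpha> * (R^2 / 4) \<le> \<alpha> * r2" using r2(1) \<alpha> by simp
  moreover have "0 \<le> P" using \<open>0 \<le> r2\<close> by (simp add: P_def)
  ultimately show False using large by simp
qed

lemma gaussian_barrier_no_interior_max:
  fixes w :: "real^'n::finite \<Rightarrow> real"
  assumes U: "open U" "twice_differentiable_on U w" and Q: "Qop w z \<ge> 0"
    and ball: "\<rho> > 0" "ball z \<rho> \<subseteq> U"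
    and max: "\<forall>x\<in>ball z \<rho>. w x + \<epsilon> * gaussian \<alpha> y x \<le> w z + \<epsilon> * gaussian \<alpha> y z"
    and R: "R > 0" "R / 2 \<le> norm (z - y)" "norm (z - y) \<le> R"
    and \<alpha>: "\<alpha> > 0" and \<epsilon>: "\<epsilon> > 0" and small: "2 * \<alpha> * \<epsilon> * R \<le> 1"
    and large: "\<alpha> * R^2 > 4 * R + 4 * CARD('n)"
  shows False
proof -
  define G where "G = gaussian \<alpha> y z"
  define d where "d = z - y"
  define p where "p = grad w z"
  define c where "c = 2 * \<alpha> * \<epsilon> * G"
  have "p = c *\<^sub>R d"
    using grad_at_gaussian_perturbation_max[OF U(2) ball max] by (simp add: p_def c_def G_def d_def)
  then have "d \<bullet> p = c * (d \<bullet> d)" "p \<bullet> p = c^2 * (d \<bullet> d)" by (simp_all add: power2_eq_square)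
  then have "\<epsilon> * G * (4 * \<alpha>^2 * (d \<bullet> d) - 2 * \<alpha> * CARD('n))
      - \<epsilon> * G * (4 * \<alpha>^2 * (c * (d \<bullet> d))^2 - 2 * \<alpha> * (c^2 * (d \<bullet> d))) / (1 + c^2 * (d \<bullet> d))
      \<le> c^2 * (d \<bullet> d)"
    using Qop_at_gaussian_perturbation_max[OF U Q ball max]
    by (simp add: trace_hessian_gaussian quad_form_hessian_gaussian p_def[symmetric] G_def d_def
        mult.assoc)
  moreover have "R^2 / 4 \<le> d \<bullet> d" "d \<bullet> d \<le> R^2"
  proof -
    have "(R / 2)^2 \<le> (norm d)^2" "(norm d)^2 \<le> R^2"
      using R by (auto simp: d_def intro!: power_mono)
    then show "R^2 / 4 \<le> d \<bullet> d" "d \<bullet> d \<le> R^2"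
      by (simp_all add: power2_norm_eq_inner power_divide)
  qed
  moreover have "0 < G" "G \<le> 1" using \<alpha> by (simp_all add: G_def gaussian_def)
  ultimately show False
    using gaussian_barrier_estimate_absurd[OF \<alpha> \<epsilon>, of G R "d \<bullet> d" "CARD('n)"] R(1) small large
    by (simp add: c_def)
qed

lemma gaussian_barrier_parameters:
  fixes R \<delta> n :: real
  assumes "R > 0" "\<delta> > 0" "n \<ge> 0"
  obtains \<alpha> \<epsilon> where "\<alpha> > 0" "\<alpha> * R^2 > 4 * R + 4 * n"
    and "\<epsilon> > 0" "\<epsilon> \<le> \<delta> / 2" "2 * \<alpha> * \<epsilon> * R \<le> 1"
proof -
  define \<alpha> where "\<alpha> = (4 * R + 4 * n) / R^2 + 1"
  define \<epsilon> where "\<epsilon> = min (\<delta> / 2) (1 / (2 * \<alpha> * R))"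
  have "\<alpha> * R^2 = 4 * R + 4 * n + R^2" using assms(1) by (simp add: \<alpha>_def field_simps)
  then have \<alpha>: "\<alpha> > 0" "\<alpha> * R^2 > 4 * R + 4 * n"
    using assms by (simp_all add: \<alpha>_def add_nonneg_pos)
  have "(2 * \<alpha> * R) * \<epsilon> \<le> (2 * \<alpha> * R) * (1 / (2 * \<alpha> * R))"
    using \<alpha>(1) assms(1) by (intro mult_left_mono) (simp_all add: \<epsilon>_def)
  then have "2 * \<alpha> * \<epsilon> * R \<le> 1" using \<alpha>(1) assms(1) by (simp add: mult_ac)
  moreover have "\<epsilon> > 0" "\<epsilon> \<le> \<delta> / 2" using assms(2) \<alpha>(1) assms(1) by (simp_all add: \<epsilon>_def)
  ultimately show ?thesis using that \<alpha> by blast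
qed

lemma ball_subset_annulus:
  fixes y z :: "'a::metric_space"
  assumes "r < dist y z" "dist y z < R"
  shows "ball z (min (dist y z - r) (R - dist y z)) \<subseteq> cball y R - ball y r"
proof
  fix x assume "x \<in> ball z (min (dist y z - r) (R - dist y z))"
  moreover have "dist y z \<le> dist y x + dist x z" "dist y x \<le> dist y z + dist z x"
    by (rule dist_triangle)+
  ultimately show "x \<in> cball y R - ball y r" by (auto simp: dist_commute)
qed

lemma gaussian_barrier_max_on_outer_sphere:
  fixes w :: "real^'n::finite \<Rightarrow> real" and y :: "real^'n" and R :: real
  defines "A \<equiv> cball y R - ball y (R / 2)"
  assumes U: "open U" "twice_differentiable_on U w" and Q: "\<forall>x\<in>U. Qop w x \<ge> 0"
    and R: "R > 0" "cball y R \<subseteq> U" and x2: "dist y x2 = R" and max: "\<forall>x\<in>U. w x \<le> w x2"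
    and inner: "\<delta> > 0" "\<forall>x\<in>sphere y (R / 2). w x \<le> w x2 - \<delta>"
    and \<alpha>: "\<alpha> > 0" "\<alpha> * R^2 > 4 * R + 4 * CARD('n)"
    and \<epsilon>: "\<epsilon> > 0" "\<epsilon> \<le> \<delta> / 2" "2 * \<alpha> * \<epsilon> * R \<le> 1"
  shows "\<forall>x\<in>A. w x + \<epsilon> * gaussian \<alpha> y x \<le> w x2 + \<epsilon> * gaussian \<alpha> y x2"
proof -
  define f where "f x = w x + \<epsilon> * gaussian \<alpha> y x" for x
  have "A \<subseteq> U" using R(2) by (auto simp: A_def)
  have "continuous_on A f"
    using continuous_on_subset[OF twice_differentiable_on_imp_continuous_on[OF U(2)] \<open>A \<subseteq> U\<close>]
    unfolding f_def gaussian_def by (intro continuous_intros)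
  moreover have "compact A" unfolding A_def by (intro compact_diff compact_cball open_ball)
  moreover have "x2 \<in> A" using x2 R(1) by (auto simp: A_def)
  ultimately obtain z where z: "z \<in> A" "\<forall>x\<in>A. f x \<le> f z"
    using continuous_attains_sup[of A f] by blast
  have "f z \<le> f x2"
  proof -
    consider "dist y z = R" | "dist y z = R / 2" | "R / 2 < dist y z" "dist y z < R"
      using z(1) by (force simp: A_def)
    then show ?thesis
    proof cases
      case 1
      then show ?thesis
        using max \<open>z \<in> A\<close> \<open>A \<subseteq> U\<close> x2 by (auto simp: f_def gaussian_eq_dist dist_commute)
    next
      case 2
      have "gaussian \<alpha> y z \<le> 1" using \<alpha>(1) by (simp add: gaussian_def)
      then have "\<epsilon> * gaussian \<alpha> y z \<le> \<epsilon>" using \<epsilon>(1) by (simp add: mult_left_le)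
      moreover have "0 \<le> \<epsilon> * gaussian \<alpha> y x2" using \<epsilon>(1) by (simp add: gaussian_def)
      moreover have "w z \<le> w x2 - \<delta>" using inner(2) 2 by simp
      ultimately show ?thesis using \<epsilon>(2) inner(1) by (simp add: f_def)
    next
      case 3
      define \<rho> where "\<rho> = min (dist y z - R / 2) (R - dist y z)"
      have "\<rho> > 0" using 3 by (simp add: \<rho>_def)
      have "ball z \<rho> \<subseteq> A" unfolding A_def \<rho>_def using 3 by (rule ball_subset_annulus)
      show ?thesis
      proof (rule FalseE, rule gaussian_barrier_no_interior_max[OF U _ \<open>\<rho> > 0\<close> _ _ R(1) _ _ \<alpha>(1) \<epsilon>(1,3) \<alpha>(2)])
        show "Qop w z \<ge> 0" using Q z(1) \<open>A \<subseteq> U\<close> by auto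
        show "ball z \<rho> \<subseteq> U" using \<open>ball z \<rho> \<subseteq> A\<close> \<open>A \<subseteq> U\<close> by blast
        show "\<forall>x\<in>ball z \<rho>. w x + \<epsilon> * gaussian \<alpha> y x \<le> w z + \<epsilon> * gaussian \<alpha> y z"
          using z(2) \<open>ball z \<rho> \<subseteq> A\<close> by (auto simp: f_def)
        show "R / 2 \<le> norm (z - y)" "norm (z - y) \<le> R"
          using 3 by (simp_all add: dist_norm norm_minus_commute)
      qed
    qed
  qed
  then show ?thesis using z(2) by (auto simp: f_def)
qed

subsection \<open>The strong maximum and minimum principles\<close>

lemma grad_gaussian_perturbation_inner_pos:
  fixes w :: "real^'n::finite \<Rightarrow> real"
  assumes "w differentiable (at x)" "grad w x = 0" "\<alpha> > 0" "\<epsilon> > 0" "x \<noteq> y"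
  shows "grad (\<lambda>x. w x + \<epsilon> * gaussian \<alpha> y x) x \<bullet> (y - x) > 0"
proof -
  have "grad (\<lambda>x. w x + \<epsilon> * gaussian \<alpha> y x) x = (2 * \<alpha> * \<epsilon> * gaussian \<alpha> y x) *\<^sub>R (y - x)"
    using assms(1,2) by (simp add: grad_add_cmult differentiable_gaussian grad_gaussian algebra_simps)
  moreover have "(y - x) \<bullet> (y - x) > 0" using assms(5) by simp
  ultimately show ?thesis using assms(3,4) by (simp add: gaussian_def)
qed

lemma hopf_touching_ball:
  fixes w :: "real^'n::finite \<Rightarrow> real"
  assumes U: "open U" "twice_differentiable_on U w" and Q: "\<forall>x\<in>U. Qop w x \<ge> 0"
    and R: "R > 0" "cball y R \<subseteq> U" and x2: "dist y x2 = R" and max: "\<forall>x\<in>U. w x \<le> w x2"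
  shows "\<exists>x\<in>ball y R. w x = w x2"
proof (rule ccontr)
  assume none: "\<not> (\<exists>x\<in>ball y R. w x = w x2)"
  have below: "\<forall>x\<in>ball y R. w x < w x2"
  proof
    fix x assume "x \<in> ball y R"
    then have "x \<in> U" "w x \<noteq> w x2" using R(2) none by auto
    then show "w x < w x2" using max by force
  qed
  have "sphere y (R / 2) \<subseteq> ball y R" using R(1) by (simp add: subset_iff)
  then have "continuous_on (sphere y (R / 2)) w" "\<forall>x\<in>sphere y (R / 2). w x < w x2"
    using continuous_on_subset[OF twice_differentiable_on_imp_continuous_on[OF U(2)]] R(2) below
    by (auto dest: subset_trans[OF _ ball_subset_cball])
  then obtain \<delta> where \<delta>: "\<delta> > 0" "\<forall>x\<in>sphere y (R / 2). w x \<le> w x2 - \<delta>"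
    using compact_strict_bound_margin[OF compact_sphere] by metis
  then obtain \<alpha> \<epsilon> where \<alpha>: "\<alpha> > 0" "\<alpha> * R^2 > 4 * R + 4 * CARD('n)"
    and \<epsilon>: "\<epsilon> > 0" "\<epsilon> \<le> \<delta> / 2" "2 * \<alpha> * \<epsilon> * R \<le> 1"
    using gaussian_barrier_parameters[OF R(1) \<delta>(1), of "CARD('n)"] by auto
  define f where "f x = w x + \<epsilon> * gaussian \<alpha> y x" for x
  define e where "e = y - x2"
  have x2U: "x2 \<in> U" using x2 R(2) by auto
  then have "w differentiable (at x2)" using U(2) by (simp add: twice_differentiable_on_def)
  then have "f differentiable (at x2)"
    unfolding f_def[abs_def] by (auto intro!: derivative_intros differentiable_gaussian)
  moreover have "f (x2 + t *\<^sub>R e) \<le> f x2" if "0 < t" "t < 1 / 2" for t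
  proof -
    have "x2 + t *\<^sub>R e - y = (1 - t) *\<^sub>R (x2 - y)" by (simp add: e_def algebra_simps)
    then have "dist y (x2 + t *\<^sub>R e) = (1 - t) * R"
      using that x2 by (simp add: dist_norm norm_minus_commute[of y] dist_commute)
    then have "x2 + t *\<^sub>R e \<in> cball y R - ball y (R / 2)" using that R(1) by simp
    then show ?thesis
      using gaussian_barrier_max_on_outer_sphere[OF U Q R x2 max \<delta> \<alpha> \<epsilon>] by (simp add: f_def)
  qed
  ultimately have "grad f x2 \<bullet> e \<le> 0" by (intro one_sided_max_grad_inner_nonpos[of _ _ "1 / 2"]) auto
  moreover have "grad f x2 \<bullet> e > 0"
  proof -
    obtain \<rho> where "\<rho> > 0" "ball x2 \<rho> \<subseteq> U" using U(1) x2U open_contains_ball by blast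
    then have "grad w x2 = 0" using max x2U \<open>w differentiable (at x2)\<close> by (intro local_max_grad_eq_0) auto
    moreover have "x2 \<noteq> y" using x2 R(1) by auto
    ultimately show ?thesis
      using grad_gaussian_perturbation_inner_pos[OF \<open>w differentiable (at x2)\<close> _ \<alpha>(1) \<epsilon>(1)]
      by (simp add: f_def[abs_def] e_def)
  qed
  ultimately show False by simp
qed

lemma open_max_level_set:
  fixes w :: "real^'n::finite \<Rightarrow> real"
  assumes U: "open U" "twice_differentiable_on U w" and Q: "\<forall>x\<in>U. Qop w x \<ge> 0"
    and max: "\<forall>x\<in>U. w x \<le> M"
  shows "open {x\<in>U. w x = M}"
  unfolding open_contains_ball
proof (intro ballI)
  fix x1 assume x1: "x1 \<in> {x\<in>U. w x = M}"
  obtain \<rho> where \<rho>: "\<rho> > 0" "cball x1 \<rho> \<subseteq> U"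
    using x1 U(1) open_contains_cball by blast
  define T where "T = {x \<in> cball x1 \<rho>. w x = M}"
  have "closed T"
    unfolding T_def using continuous_on_subset[OF twice_differentiable_on_imp_continuous_on[OF U(2)] \<rho>(2)]
    by (rule continuous_closed_preimage_constant) simp
  have "x1 \<in> T" using x1 \<rho>(1) by (simp add: T_def)
  have "y \<in> {x\<in>U. w x = M}" if y: "y \<in> ball x1 (\<rho> / 2)" for y
  proof (rule ccontr)
    assume y_notin: "y \<notin> {x\<in>U. w x = M}"
    obtain x2 where x2: "x2 \<in> T" "\<And>x. x \<in> T \<Longrightarrow> dist y x2 \<le> dist y x"
      using distance_attains_inf[OF \<open>closed T\<close>, of y] \<open>x1 \<in> T\<close> by blast
    define R where "R = dist y x2"
    have "y \<in> U" using y \<rho> by auto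
    then have "y \<notin> T" using y_notin by (auto simp: T_def)
    then have "R > 0" using x2(1) by (auto simp: R_def)
    have "R < \<rho> / 2" using x2(2)[OF \<open>x1 \<in> T\<close>] y by (simp add: R_def dist_commute)
    have "cball y R \<subseteq> cball x1 \<rho>"
    proof
      fix x assume "x \<in> cball y R"
      then show "x \<in> cball x1 \<rho>"
        using y \<open>R < \<rho> / 2\<close> dist_triangle[of x1 x y] by (simp add: dist_commute)
    qed
    moreover have "\<forall>x\<in>U. w x \<le> w x2" using max x2(1) by (simp add: T_def)
    ultimately obtain x where x: "x \<in> ball y R" "w x = w x2"
      using hopf_touching_ball[OF U Q \<open>R > 0\<close> _ R_def[symmetric]] \<rho>(2) by blast
    have "x \<in> cball x1 \<rho>" using x(1) ball_subset_cball[of y R] \<open>cball y R \<subseteq> cball x1 \<rho>\<close> by blast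
    then have "x \<in> T" using x(2) x2(1) by (simp add: T_def)
    then show False using x2(2) x(1) by (fastforce simp: R_def)
  qed
  then show "\<exists>e>0. ball x1 e \<subseteq> {x\<in>U. w x = M}" using \<rho>(1) by (intro exI[of _ "\<rho> / 2"]) auto
qed

lemma strong_max_principle:
  fixes w :: "real^'n::finite \<Rightarrow> real"
  assumes U: "open U" "connected U" "twice_differentiable_on U w" and Q: "\<forall>x\<in>U. Qop w x \<ge> 0"
    and x0: "x0 \<in> U" "\<forall>x\<in>U. w x \<le> w x0"
  shows "\<forall>x\<in>U. w x = w x0"
proof -
  have "openin (top_of_set U) {x\<in>U. w x = w x0}"
    using open_max_level_set[OF U(1,3) Q x0(2)] by (intro open_subset) auto
  moreover have "closedin (top_of_set U) {x\<in>U. w x = w x0}"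
    using twice_differentiable_on_imp_continuous_on[OF U(3)] by (rule continuous_closedin_preimage_constant)
  ultimately have "{x\<in>U. w x = w x0} = U"
    using U(2) x0(1) unfolding connected_clopen by blast
  then show ?thesis by blast
qed

lemma Qop_neg:
  fixes w :: "real^'n::finite \<Rightarrow> real"
  assumes "open U" "twice_differentiable_on U w" "x \<in> U"
  shows "Qop (\<lambda>x. - w x) x = 2 * grad_sq w x - Qop w x"
proof -
  have "grad (\<lambda>x. - w x) x = - grad w x"
    using assms by (simp add: grad_def vec_eq_iff partial_minus twice_differentiable_on_def)
  moreover have "hessian (\<lambda>x. - w x) x = - hessian w x"
    using hessian_cmult[OF assms, of "- 1"] by simp
  moreover have "trace (- A) = - trace A" "(- A) *v (- v) = A *v v" for A :: "real^'n^'n" and v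
    by (simp_all add: trace_def sum_negf matrix_vector_mult_def vec_eq_iff)
  ultimately show ?thesis by (simp add: Qop_eq grad_sq_eq_inner)
qed

lemma strong_min_principle:
  fixes w :: "real^'n::finite \<Rightarrow> real"
  assumes U: "open U" "connected U" "twice_differentiable_on U w" and Q: "\<forall>x\<in>U. Qop w x \<le> 0"
    and x0: "x0 \<in> U" "\<forall>x\<in>U. w x0 \<le> w x"
  shows "\<forall>x\<in>U. w x = w x0"
proof -
  have "Qop (\<lambda>x. - w x) x \<ge> 0" if "x \<in> U" for x
  proof -
    have "grad_sq w x \<ge> 0" by (simp add: grad_sq_def sum_nonneg)
    then show ?thesis using Qop_neg[OF U(1,3) that] bspec[OF Q that] by linarith
  qed
  moreover have "twice_differentiable_on U (\<lambda>x. - w x)"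
    using twice_differentiable_on_cmult[OF U(1,3), of "- 1"] by simp
  ultimately have "\<forall>x\<in>U. - w x = - w x0"
    using x0 by (intro strong_max_principle U(1,2)) auto
  then show ?thesis by simp
qed

subsection \<open>The logarithmic substitution\<close>

lemma partial_ln:
  fixes u :: "real^'n::finite \<Rightarrow> real"
  assumes "u differentiable (at x)" "u x > 0"
  shows "partial i (\<lambda>x. ln (u x)) x = partial i u x / u x"
  using has_real_derivative_partial[OF assms(1)] assms(2)
  by (intro partial_eqI) (auto intro!: derivative_eq_intros simp: field_simps)

lemma partial_divide:
  fixes f g :: "real^'n::finite \<Rightarrow> real"
  assumes "f differentiable (at x)" "g differentiable (at x)" "g x \<noteq> 0"
  shows "partial i (\<lambda>x. f x / g x) x = (partial i f x * g x - f x * partial i g x) / (g x)^2"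
  using has_real_derivative_partial[OF assms(1)] has_real_derivative_partial[OF assms(2)] assms(3)
  by (intro partial_eqI) (auto intro!: derivative_eq_intros simp: field_simps power2_eq_square)

lemma grad_ln:
  fixes u :: "real^'n::finite \<Rightarrow> real"
  assumes "u differentiable (at x)" "u x > 0"
  shows "grad (\<lambda>x. ln (u x)) x = (1 / u x) *\<^sub>R grad u x"
  using assms by (simp add: grad_def vec_eq_iff partial_ln)

lemma twice_differentiable_on_ln:
  fixes u :: "real^'n::finite \<Rightarrow> real"
  assumes U: "open U" "twice_differentiable_on U u" and pos: "\<forall>x\<in>U. u x > 0"
  shows "twice_differentiable_on U (\<lambda>x. ln (u x))"
  unfolding twice_differentiable_on_def
proof (intro conjI allI ballI)
  fix x assume x: "x \<in> U"
  obtain u' where "(u has_derivative u') (at x)"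
    using U(2) x by (auto simp: twice_differentiable_on_def differentiable_def)
  then have "((\<lambda>x. ln (u x)) has_derivative (\<lambda>h. u' h * inverse (u x))) (at x)"
    using pos x by (auto intro!: derivative_eq_intros)
  then show "(\<lambda>x. ln (u x)) differentiable (at x)" by (rule differentiableI)
  fix i
  have "(\<lambda>y. partial i u y / u y) differentiable (at x)"
    using U(2) pos x by (auto intro!: derivative_intros simp: twice_differentiable_on_def)
  then show "partial i (\<lambda>x. ln (u x)) differentiable (at x)"
    by (rule differentiable_at_cong_open[OF U(1) x, rotated])
       (use U(2) pos in \<open>auto simp: partial_ln twice_differentiable_on_def\<close>)
qed

lemma hessian_ln:
  fixes u :: "real^'n::finite \<Rightarrow> real"
  assumes U: "open U" "twice_differentiable_on U u" and pos: "\<forall>x\<in>U. u x > 0" and x: "x \<in> U"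
  shows "hessian (\<lambda>x. ln (u x)) x
    = (1 / u x) *\<^sub>R hessian u x - (1 / (u x)^2) *\<^sub>R (\<chi> i j. partial i u x * partial j u x)"
proof -
  have "partial i (partial j (\<lambda>x. ln (u x))) x
      = (partial i (partial j u) x * u x - partial j u x * partial i u x) / (u x)^2" for i j
  proof -
    have "partial i (partial j (\<lambda>x. ln (u x))) x = partial i (\<lambda>y. partial j u y / u y) x"
      by (rule partial_cong[OF U(1) x]) (use U(2) pos in \<open>auto simp: partial_ln twice_differentiable_on_def\<close>)
    also have "\<dots> = (partial i (partial j u) x * u x - partial j u x * partial i u x) / (u x)^2"
      using U(2) pos x by (intro partial_divide) (auto simp: twice_differentiable_on_def)
    finally show ?thesis .
  qed
  moreover have "u x \<noteq> 0" using pos x by auto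
  ultimately show ?thesis by (simp add: hessian_def vec_eq_iff field_simps power2_eq_square)
qed

lemma has_real_derivative_grad_sq_axis:
  fixes u :: "real^'n::finite \<Rightarrow> real"
  assumes "\<forall>j. partial j u differentiable (at x)"
  shows "((\<lambda>t. grad_sq u (x + t *\<^sub>R axis i 1)) has_real_derivative 2 * (hessian u x *v grad u x)$i) (at 0)"
  unfolding grad_sq_def
  using has_real_derivative_partial[of "partial _ u" x i] assms
  by (auto intro!: derivative_eq_intros
      simp: hessian_def grad_def matrix_vector_mult_def sum_distrib_left algebra_simps)

lemma partial_divop_summand:
  fixes u :: "real^'n::finite \<Rightarrow> real"
  assumes du: "u differentiable (at x)" "\<forall>j. partial j u differentiable (at x)" and pos: "u x > 0"
  defines "S \<equiv> sqrt ((u x)^2 + grad_sq u x)"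
  shows "partial i (\<lambda>y. u y * partial i u y / sqrt ((u y)^2 + grad_sq u y)) x
      = ((partial i u x)^2 + u x * partial i (partial i u) x) / S
        - u x * partial i u x * (u x * partial i u x + (hessian u x *v grad u x)$i) / S^3"
proof (rule partial_eqI)
  have "S > 0" using pos by (simp add: S_def grad_sq_def add_pos_nonneg sum_nonneg)
  define X where "X t = (u (x + t *\<^sub>R axis i 1))^2 + grad_sq u (x + t *\<^sub>R axis i 1)" for t
  define X' where "X' = 2 * u x * partial i u x + 2 * (hessian u x *v grad u x)$i"
  have "(X has_real_derivative X') (at 0)"
    unfolding X_def X'_def
    by (auto intro!: derivative_eq_intros has_real_derivative_partial[OF du(1)]
        has_real_derivative_grad_sq_axis du(2))
  moreover have "X 0 = S^2" "sqrt (X 0) = S" using \<open>S > 0\<close> by (simp_all add: X_def S_def)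
  ultimately have "((\<lambda>t. sqrt (X t)) has_real_derivative X' / (2 * S)) (at 0)"
    using \<open>S > 0\<close> DERIV_chain2[OF DERIV_real_sqrt, of X 0 X'] by (simp add: divide_simps mult.commute)
  moreover have "((\<lambda>t. u (x + t *\<^sub>R axis i 1) * partial i u (x + t *\<^sub>R axis i 1)) has_real_derivative
      partial i u x * partial i u x + u x * partial i (partial i u) x) (at 0)"
    using du(2) by (auto intro!: derivative_eq_intros has_real_derivative_partial[OF du(1)]
        has_real_derivative_partial[of "partial i u"])
  ultimately have "((\<lambda>t. u (x + t *\<^sub>R axis i 1) * partial i u (x + t *\<^sub>R axis i 1) / sqrt (X t))
      has_real_derivative ((partial i u x * partial i u x + u x * partial i (partial i u) x) * S
        - u x * partial i u x * (X' / (2 * S))) / (S * S)) (at 0)"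
    using DERIV_divide \<open>sqrt (X 0) = S\<close> \<open>S > 0\<close> by fastforce
  moreover have "((partial i u x * partial i u x + u x * partial i (partial i u) x) * S
        - u x * partial i u x * (X' / (2 * S))) / (S * S)
      = ((partial i u x)^2 + u x * partial i (partial i u) x) / S
        - u x * partial i u x * (u x * partial i u x + (hessian u x *v grad u x)$i) / S^3"
    using \<open>S > 0\<close> by (simp add: X'_def field_simps power2_eq_square power3_eq_cube)
  ultimately show "((\<lambda>t. u (x + t *\<^sub>R axis i 1) * partial i u (x + t *\<^sub>R axis i 1)
      / sqrt ((u (x + t *\<^sub>R axis i 1))^2 + grad_sq u (x + t *\<^sub>R axis i 1))) has_real_derivative
      ((partial i u x)^2 + u x * partial i (partial i u) x) / S
      - u x * partial i u x * (u x * partial i u x + (hessian u x *v grad u x)$i) / S^3) (at 0)"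
    by (simp add: X_def)
qed

lemma divop_eq:
  fixes u :: "real^'n::finite \<Rightarrow> real"
  assumes du: "u differentiable (at x)" "\<forall>j. partial j u differentiable (at x)" and pos: "u x > 0"
  defines "S \<equiv> sqrt ((u x)^2 + grad_sq u x)"
  shows "divop u x = (grad u x \<bullet> grad u x + u x * trace (hessian u x)) / S
    - u x * (u x * (grad u x \<bullet> grad u x) + grad u x \<bullet> (hessian u x *v grad u x)) / S^3"
  unfolding divop_def partial_divop_summand[OF du pos] S_def[symmetric]
  by (simp add: sum_subtractf sum.distrib sum_divide_distrib[symmetric] sum_distrib_left
      trace_def hessian_def grad_def inner_vec_def power2_eq_square algebra_simps)

lemma outer_matrix_vector_mult: "(\<chi> i j. p$i * p$j) *v v = (p \<bullet> v) *\<^sub>R (p :: real^'n::finite)"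
  by (simp add: matrix_vector_mult_def inner_vec_def vec_eq_iff sum_distrib_left algebra_simps)

lemma trace_outer: "trace (\<chi> i j. p$i * p$j) = p \<bullet> (p :: real^'n::finite)"
  by (simp add: trace_def inner_vec_def)

lemma ln_substitution_identity:
  fixes a S P T B :: real
  assumes "a > 0" "S > 0" "S^2 = a^2 + P"
  shows "(T / a - P / a^2) - (B / a^3 - P^2 / a^4) / (1 + P / a^2) + P / a^2
    = ((P + a * T) / S - a * (a * P + B) / S^3) * S / a^2"
proof -
  have "1 + P / a^2 = S^2 / a^2" using assms by (simp add: field_simps)
  then show ?thesis using assms by (simp add: field_simps power2_eq_square power3_eq_cube) algebra
qed

lemma Qop_ln:
  fixes u :: "real^'n::finite \<Rightarrow> real"
  assumes U: "open U" "twice_differentiable_on U u" and pos: "\<forall>x\<in>U. u x > 0" and x: "x \<in> U"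
  shows "Qop (\<lambda>x. ln (u x)) x = divop u x * sqrt ((u x)^2 + grad_sq u x) / (u x)^2"
proof -
  define a where "a = u x"
  define p where "p = grad u x"
  define H where "H = hessian u x"
  define S where "S = sqrt (a^2 + p \<bullet> p)"
  have "a > 0" using pos x by (simp add: a_def)
  then have "S > 0" "S^2 = a^2 + p \<bullet> p" by (simp_all add: S_def add_pos_nonneg)
  have du: "u differentiable (at x)" "\<forall>j. partial j u differentiable (at x)"
    using U(2) x by (auto simp: twice_differentiable_on_def)
  have q: "grad (\<lambda>x. ln (u x)) x = (1 / a) *\<^sub>R p"
    using grad_ln[OF du(1)] pos x by (simp add: a_def p_def)
  have Hl: "hessian (\<lambda>x. ln (u x)) x = (1 / a) *\<^sub>R H - (1 / a^2) *\<^sub>R (\<chi> i j. p$i * p$j)"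
    using hessian_ln[OF U pos x] by (simp add: a_def p_def H_def grad_def)
  have "Qop (\<lambda>x. ln (u x)) x = (trace H / a - p \<bullet> p / a^2)
      - (p \<bullet> (H *v p) / a^3 - (p \<bullet> p)^2 / a^4) / (1 + p \<bullet> p / a^2) + p \<bullet> p / a^2"
    by (simp add: Qop_eq q Hl trace_sub trace_scaleR trace_outer matrix_vector_mult_diff_rdistrib matrix_vector_mult_scaleR
        scaleR_matrix_vector_mult outer_matrix_vector_mult inner_diff_right power2_eq_square
        power3_eq_cube power4_eq_xxxx)
       (use \<open>a > 0\<close> in \<open>simp add: diff_divide_distrib\<close>)
  also have "\<dots> = ((p \<bullet> p + a * trace H) / S - a * (a * (p \<bullet> p) + p \<bullet> (H *v p)) / S^3) * S / a^2"
    using \<open>a > 0\<close> \<open>S > 0\<close> \<open>S^2 = a^2 + p \<bullet> p\<close> by (rule ln_substitution_identity)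
  also have "\<dots> = divop u x * sqrt ((u x)^2 + grad_sq u x) / (u x)^2"
    using divop_eq[OF du pos[rule_format, OF x]]
    by (simp add: S_def a_def p_def H_def grad_sq_eq_inner)
  finally show ?thesis .
qed

lemma Qop_ln_nonneg_iff:
  fixes u :: "real^'n::finite \<Rightarrow> real"
  assumes "open U" "twice_differentiable_on U u" "\<forall>x\<in>U. u x > 0" "x \<in> U"
  shows "Qop (\<lambda>x. ln (u x)) x \<ge> 0 \<longleftrightarrow> divop u x \<ge> 0"
    and "Qop (\<lambda>x. ln (u x)) x \<le> 0 \<longleftrightarrow> divop u x \<le> 0"
proof -
  have "u x > 0" "grad_sq u x \<ge> 0" using assms(3,4) by (auto simp: grad_sq_def sum_nonneg)
  define c where "c = sqrt ((u x)^2 + grad_sq u x) / (u x)^2"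
  have "c > 0" using \<open>u x > 0\<close> \<open>grad_sq u x \<ge> 0\<close> by (simp add: c_def add_pos_nonneg)
  moreover have "Qop (\<lambda>x. ln (u x)) x = divop u x * c"
    using Qop_ln[OF assms] by (simp add: c_def)
  ultimately show "Qop (\<lambda>x. ln (u x)) x \<ge> 0 \<longleftrightarrow> divop u x \<ge> 0"
    and "Qop (\<lambda>x. ln (u x)) x \<le> 0 \<longleftrightarrow> divop u x \<le> 0"
    by (simp_all add: zero_le_mult_iff mult_le_0_iff)
qed

lemma strong_max_principle_divop:
  fixes u :: "real^'n::finite \<Rightarrow> real"
  assumes U: "open U" "connected U" "twice_differentiable_on U u" and pos: "\<forall>x\<in>U. u x > 0"
    and div: "\<forall>x\<in>U. divop u x \<ge> 0" and x0: "x0 \<in> U" "\<forall>x\<in>U. u x \<le> u x0"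
  shows "\<forall>x\<in>U. u x = u x0"
proof -
  have "\<forall>x\<in>U. ln (u x) \<le> ln (u x0)"
  proof
    fix x assume "x \<in> U"
    then show "ln (u x) \<le> ln (u x0)" using x0 pos by simp
  qed
  moreover have "\<forall>x\<in>U. Qop (\<lambda>x. ln (u x)) x \<ge> 0"
    using div Qop_ln_nonneg_iff(1)[OF U(1,3) pos] by blast
  ultimately have ln_eq: "\<forall>x\<in>U. ln (u x) = ln (u x0)"
    using strong_max_principle[OF U(1,2) twice_differentiable_on_ln[OF U(1,3) pos] _ x0(1)] by blast
  show ?thesis
  proof
    fix x assume "x \<in> U"
    then show "u x = u x0" using ln_eq pos x0(1) ln_inj_iff by metis
  qed
qed

lemma strong_min_principle_divop:
  fixes u :: "real^'n::finite \<Rightarrow> real"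
  assumes U: "open U" "connected U" "twice_differentiable_on U u" and pos: "\<forall>x\<in>U. u x > 0"
    and div: "\<forall>x\<in>U. divop u x \<le> 0" and x0: "x0 \<in> U" "\<forall>x\<in>U. u x0 \<le> u x"
  shows "\<forall>x\<in>U. u x = u x0"
proof -
  have "\<forall>x\<in>U. ln (u x0) \<le> ln (u x)"
  proof
    fix x assume "x \<in> U"
    then show "ln (u x0) \<le> ln (u x)" using x0 pos by simp
  qed
  moreover have "\<forall>x\<in>U. Qop (\<lambda>x. ln (u x)) x \<le> 0"
    using div Qop_ln_nonneg_iff(2)[OF U(1,3) pos] by blast
  ultimately have ln_eq: "\<forall>x\<in>U. ln (u x) = ln (u x0)"
    using strong_min_principle[OF U(1,2) twice_differentiable_on_ln[OF U(1,3) pos] _ x0(1)] by blast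
  show ?thesis
  proof
    fix x assume "x \<in> U"
    then show "u x = u x0" using ln_eq pos x0(1) ln_inj_iff by metis
  qed
qed

theorem mainTheorem3:
  fixes U :: "(real^'n) set"
  assumes "open U" and "connected U"
  shows "(\<forall>w. C2_on U w \<and> (\<forall>x\<in>U. Qop w x \<ge> 0) \<and> (\<exists>x0\<in>U. \<forall>x\<in>U. w x \<le> w x0)
            \<longrightarrow> (\<exists>c. \<forall>x\<in>U. w x = c))
       \<and> (\<forall>w. C2_on U w \<and> (\<forall>x\<in>U. Qop w x \<le> 0) \<and> (\<exists>x0\<in>U. \<forall>x\<in>U. w x0 \<le> w x)
            \<longrightarrow> (\<exists>c. \<forall>x\<in>U. w x = c))
       \<and> (\<forall>u. C2_on U u \<and> (\<forall>x\<in>U. u x > 0) \<and> (\<forall>x\<in>U. divop u x \<ge> 0)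
              \<and> (\<exists>x0\<in>U. \<forall>x\<in>U. u x \<le> u x0)
            \<longrightarrow> (\<exists>c. \<forall>x\<in>U. u x = c))
       \<and> (\<forall>u. C2_on U u \<and> (\<forall>x\<in>U. u x > 0) \<and> (\<forall>x\<in>U. divop u x \<le> 0)
              \<and> (\<exists>x0\<in>U. \<forall>x\<in>U. u x0 \<le> u x)
            \<longrightarrow> (\<exists>c. \<forall>x\<in>U. u x = c))"
proof (intro conjI allI impI; elim conjE bexE)
  fix w x0 assume "C2_on U w" "\<forall>x\<in>U. Qop w x \<ge> 0" "x0 \<in> U" "\<forall>x\<in>U. w x \<le> w x0"
  then show "\<exists>c. \<forall>x\<in>U. w x = c"
    using strong_max_principle[OF assms C2_on_imp_twice_differentiable_on] by blast
next
  fix w x0 assume "C2_on U w" "\<forall>x\<in>U. Qop w x \<le> 0" "x0 \<in> U" "\<forall>x\<in>U. w x0 \<le> w x"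
  then show "\<exists>c. \<forall>x\<in>U. w x = c"
    using strong_min_principle[OF assms C2_on_imp_twice_differentiable_on] by blast
next
  fix u x0 assume "C2_on U u" "\<forall>x\<in>U. u x > 0" "\<forall>x\<in>U. divop u x \<ge> 0" "x0 \<in> U" "\<forall>x\<in>U. u x \<le> u x0"
  then show "\<exists>c. \<forall>x\<in>U. u x = c"
    using strong_max_principle_divop[OF assms C2_on_imp_twice_differentiable_on] by blast
next
  fix u x0 assume "C2_on U u" "\<forall>x\<in>U. u x > 0" "\<forall>x\<in>U. divop u x \<le> 0" "x0 \<in> U" "\<forall>x\<in>U. u x0 \<le> u x"
  then show "\<exists>c. \<forall>x\<in>U. u x = c"
    using strong_min_principle_divop[OF assms C2_on_imp_twice_differentiable_on] by blast
qed

end
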